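(* Let $\hat f(z)=z+\beta_4z^4+\beta_7z^7+\cdots$ be a $3$-fold symmetric function in $\mathscr{S}^*_\wp$ (equivalently $\hat f(z)=(f(z^3))^{1/3}$ for some $f\in\mathscr{S}^*_\wp$). Then its third Hankel determinant satisfies $|H_3(1)|=|\beta_4|^2\le 1/9$, and the bound is sharp (attained by $\hat f(z)=z\exp\left(\tfrac13(e^{z^3}-1)\right)$).
   Context: $\mathbb{D}$ is the unit disk; $\mathcal{A}$ is the class of analytic $f$ on $\mathbb{D}$ with $f(0)=0,f'(0)=1$, written $f(z)=z+\sum_{k\ge2}b_kz^k$. $f\prec g$ means $f=g\circ\omega$ for analytic $\omega:\mathbb{D}\to\mathbb{D}$, $\omega(0)=0$. $\wp(z)=1+ze^z$, $\mathscr{S}^*_\wp=\{f\in\mathcal{A}:zf'(z)/f(z)\prec\wp(z)\}$. $f$ is $3$-fold symmetric if $f(e^{2\pi i/3}z)=e^{2\pi i/3}f(z)$ for all $z\in\mathbb{D}$. The third Hankel determinant is $H_3(1)=\det\begin{pmatrix}1&b_2&b_3\\ b_2&b_3&b_4\\ b_3&b_4&b_5\end{pmatrix}$, which for a $3$-fold symmetric function equals $-b_4^2$. *)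

theory Defs
  imports "HOL-Analysis.Analysis"
begin

abbreviation unit_disk :: "complex set" where
  "unit_disk \<equiv> ball 0 1"

definition coef :: "(complex \<Rightarrow> complex) \<Rightarrow> nat \<Rightarrow> complex" where
  "coef f k = (deriv ^^ k) f 0 / of_nat (fact k)"

definition classA :: "(complex \<Rightarrow> complex) \<Rightarrow> bool" where
  "classA f \<longleftrightarrow> f holomorphic_on unit_disk \<and> f 0 = 0 \<and> deriv f 0 = 1"

definition subordinate :: "(complex \<Rightarrow> complex) \<Rightarrow> (complex \<Rightarrow> complex) \<Rightarrow> bool" where
  "subordinate f g \<longleftrightarrow>
     (\<exists>w. w holomorphic_on unit_disk \<and> w ` unit_disk \<subseteq> unit_disk \<and> w 0 = 0 \<and>
          (\<forall>z\<in>unit_disk. f z = g (w z)))"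

definition wp :: "complex \<Rightarrow> complex" where
  "wp z = 1 + z * exp z"

text \<open>S*_wp. The quotient z f'(z)/f(z) has a removable singularity at 0 with value 1;
  we use that value there.\<close>
definition starlike_wp :: "(complex \<Rightarrow> complex) \<Rightarrow> bool" where
  "starlike_wp f \<longleftrightarrow> classA f \<and>
     subordinate (\<lambda>z. if z = 0 then 1 else z * deriv f z / f z) wp"

definition threefold_symmetric :: "(complex \<Rightarrow> complex) \<Rightarrow> bool" where
  "threefold_symmetric f \<longleftrightarrow>
     (\<forall>z\<in>unit_disk. f (exp (2 * pi * \<i> / 3) * z) = exp (2 * pi * \<i> / 3) * f z)"

text \<open>Third Hankel determinant H_3(1) = det [[1,b2,b3],[b2,b3,b4],[b3,b4,b5]], expanded.\<close>
definition hankel3 :: "(complex \<Rightarrow> complex) \<Rightarrow> complex" where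
  "hankel3 f = (let b2 = coef f 2; b3 = coef f 3; b4 = coef f 4; b5 = coef f 5 in
      1 * (b3 * b5 - b4 * b4) - b2 * (b2 * b5 - b4 * b3) + b3 * (b2 * b4 - b3 * b3))"

end

theory Submission
  imports Defs "HOL-Complex_Analysis.Complex_Analysis"
begin

text \<open>Invariance under the rotation by omega = exp(2 pi i/3) kills every Taylor coefficient
  b_k with k not congruent to 1 mod 3, so H_3(1) = -b_4^2. Writing z f'/f = wp o w with a Schwarz
  function w and comparing coefficients in z f' = f (1 + w exp w) forces w_1 = w_2 = 0 and
  3 b_4 = w_3; Cauchy's estimate for the self-map w of the disk gives |w_3| <= 1. Equality is
  attained for w(z) = z^3, for which the equation is solved by z exp((exp(z^3) - 1)/3).\<close>

definition omega3 :: complex where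
  "omega3 = exp (2 * pi * \<i> / 3)"

lemma omega3_cube: "omega3 ^ 3 = 1"
proof -
  have "omega3 ^ 3 = exp (of_nat 3 * (2 * pi * \<i> / 3))"
    unfolding omega3_def by (simp only: exp_of_nat_mult)
  also have "\<dots> = exp (2 * of_real pi * \<i>)" by (rule arg_cong[where f = exp]) simp
  finally show ?thesis by (simp only: exp_two_pi_i)
qed

lemma omega3_ne_1: "omega3 \<noteq> 1"
proof
  assume "omega3 = 1"
  then obtain n :: int where "2 * pi / 3 = 2 * pi * n"
    unfolding omega3_def exp_eq_1 by auto
  hence "1 = 3 * n" by (simp add: field_simps)
  thus False by presburger
qed

lemma omega3_power_mod: "omega3 ^ k = omega3 ^ (k mod 3)"
proof -
  have "omega3 ^ k = (omega3 ^ 3) ^ (k div 3) * omega3 ^ (k mod 3)"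
    by (subst div_mult_mod_eq[symmetric, of k 3])
      (simp only: power_add power_mult[symmetric] mult.commute[of 3])
  thus ?thesis by (simp add: omega3_cube)
qed

lemma omega3_power_eq_self_iff: "omega3 ^ k = omega3 \<longleftrightarrow> k mod 3 = 1"
proof -
  have "omega3 \<noteq> 0" by (simp add: omega3_def)
  have "k mod 3 = 0 \<or> k mod 3 = 1 \<or> k mod 3 = 2" by presburger
  thus ?thesis
    using omega3_ne_1 \<open>omega3 \<noteq> 0\<close> by (subst omega3_power_mod) (auto simp: power2_eq_square)
qed

lemma threefold_symmetric_higher_deriv_0:
  assumes hol: "f holomorphic_on unit_disk" and sym: "threefold_symmetric f"
  shows "omega3 ^ k * (deriv ^^ k) f 0 = omega3 * (deriv ^^ k) f 0"
proof -
  have rotate: "omega3 * z \<in> unit_disk" if "z \<in> unit_disk" for z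
    using that by (simp add: norm_mult omega3_def)
  have "eventually (\<lambda>z. z \<in> unit_disk) (nhds (0::complex))"
    by (intro eventually_nhds_in_open) auto
  hence "eventually (\<lambda>z. f (omega3 * z) = omega3 * f z) (nhds 0)"
    by eventually_elim (use sym in \<open>simp add: threefold_symmetric_def omega3_def\<close>)
  hence "(deriv ^^ k) (\<lambda>z. f (omega3 * z)) 0 = (deriv ^^ k) (\<lambda>z. omega3 * f z) 0"
    by (rule higher_deriv_cong_ev) simp
  moreover have "(deriv ^^ k) (\<lambda>z. f (omega3 * z)) 0 = omega3 ^ k * (deriv ^^ k) f 0"
    using higher_deriv_compose_linear[OF hol _ _ _ rotate, of unit_disk 0 k] by simp
  moreover have "(deriv ^^ k) (\<lambda>z. omega3 * f z) 0 = omega3 * (deriv ^^ k) f 0"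
    by (rule higher_deriv_cmult[OF hol]) auto
  ultimately show ?thesis by simp
qed

lemma threefold_symmetric_coef_eq_0:
  assumes "f holomorphic_on unit_disk" "threefold_symmetric f" "k mod 3 \<noteq> 1"
  shows "coef f k = 0"
proof -
  have "(omega3 ^ k - omega3) * (deriv ^^ k) f 0 = 0"
    using threefold_symmetric_higher_deriv_0[OF assms(1,2)] by (simp add: algebra_simps)
  with assms(3) show ?thesis by (simp add: coef_def omega3_power_eq_self_iff)
qed

lemma hankel3_threefold_symmetric:
  assumes "f holomorphic_on unit_disk" "threefold_symmetric f"
  shows "hankel3 f = - (coef f 4 ^ 2)"
  using threefold_symmetric_coef_eq_0[OF assms, of 2] threefold_symmetric_coef_eq_0[OF assms, of 3]
    threefold_symmetric_coef_eq_0[OF assms, of 5]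
  by (simp add: hankel3_def Let_def power2_eq_square)

lemma eventually_nonzero_at_simple_zero:
  assumes "(f has_field_derivative c) (at a)" "f a = 0" "c \<noteq> 0"
  shows "eventually (\<lambda>z. f z \<noteq> 0) (at a)"
proof -
  have "((\<lambda>z. (f z - f a) / (z - a)) \<longlongrightarrow> c) (at a)"
    using assms(1) by (simp add: has_field_derivative_iff)
  hence "eventually (\<lambda>z. (f z - f a) / (z - a) \<noteq> 0) (at a)"
    using assms(3) by (rule tendsto_imp_eventually_ne)
  thus ?thesis by (rule eventually_mono) (auto simp: assms(2))
qed

lemma starlike_wpE:
  assumes "starlike_wp f"
  obtains w where "w holomorphic_on unit_disk" "w ` unit_disk \<subseteq> unit_disk" "w 0 = 0"
    "eventually (\<lambda>z. z * deriv f z = f z * wp (w z)) (nhds 0)"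
proof -
  from assms have hol: "f holomorphic_on unit_disk" and f0: "f 0 = 0" and f'0: "deriv f 0 = 1"
    by (auto simp: starlike_wp_def classA_def)
  from assms obtain w where w: "w holomorphic_on unit_disk" "w ` unit_disk \<subseteq> unit_disk" "w 0 = 0"
    and sub: "\<And>z. z \<in> unit_disk \<Longrightarrow> (if z = 0 then 1 else z * deriv f z / f z) = wp (w z)"
    by (auto simp: starlike_wp_def subordinate_def)
  have "(f has_field_derivative 1) (at 0)"
    using f'0 hol by (metis DERIV_deriv_iff_field_differentiable centre_in_ball
        holomorphic_on_imp_differentiable_at open_ball zero_less_one)
  hence "eventually (\<lambda>z. z \<noteq> 0 \<longrightarrow> f z \<noteq> 0) (nhds 0)"
    using eventually_nonzero_at_simple_zero[of f 1 0] f0 by (simp add: eventually_at_filter)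
  moreover have "eventually (\<lambda>z. z \<in> unit_disk) (nhds (0::complex))"
    by (intro eventually_nhds_in_open) auto
  ultimately have "eventually (\<lambda>z. z * deriv f z = f z * wp (w z)) (nhds 0)"
  proof eventually_elim
    case (elim z)
    show ?case
    proof (cases "z = 0")
      case True
      with f0 show ?thesis by simp
    next
      case False
      with elim sub[of z] show ?thesis by (simp add: divide_eq_eq)
    qed
  qed
  with w that show ?thesis by blast
qed

lemma fps_nth_4_of_starlike_equation:
  fixes F W E :: "'a::comm_ring_1 fps"
  assumes eq: "fps_X * fps_deriv F = F * (1 + W * E)"
    and F: "fps_nth F 0 = 0" "fps_nth F 1 = 1" "fps_nth F 2 = 0" "fps_nth F 3 = 0"
    and W0: "fps_nth W 0 = 0" and E0: "fps_nth E 0 = 1"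
  shows "3 * fps_nth F 4 = fps_nth W 3"
proof -
  have coeff: "fps_nth (fps_X * fps_deriv F) n = fps_nth (F * (1 + W * E)) n" for n
    using eq by simp
  have "fps_nth W 1 = 0" using coeff[of 2] F W0 E0
    by (simp add: fps_mult_nth numeral_eq_Suc)
  moreover have "fps_nth W 2 = 0" using coeff[of 3] F W0 E0 \<open>fps_nth W 1 = 0\<close>
    by (simp add: fps_mult_nth numeral_eq_Suc)
  ultimately show ?thesis using coeff[of 4] F W0 E0
    by (simp add: fps_mult_nth numeral_eq_Suc)
qed

lemma coef_eq_fps_nth: "coef f n = fps_nth (fps_expansion f 0) n"
  by (simp add: coef_def fps_expansion_def)

lemma coef_4_of_starlike_wp_equation:
  assumes f: "f analytic_on {0}" "f 0 = 0" "deriv f 0 = 1" "coef f 2 = 0" "coef f 3 = 0"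
    and w: "w analytic_on {0}" "w 0 = 0"
    and eq: "eventually (\<lambda>z. z * deriv f z = f z * wp (w z)) (nhds 0)"
  shows "3 * coef f 4 = coef w 3"
proof -
  define F W E where "F = fps_expansion f 0" and "W = fps_expansion w 0"
    and "E = fps_expansion (\<lambda>z. exp (w z)) 0"
  have F: "f has_fps_expansion F" and W: "w has_fps_expansion W"
    unfolding F_def W_def using f(1) w(1) by (simp_all add: analytic_at_imp_has_fps_expansion_0)
  have E: "(\<lambda>z. exp (w z)) has_fps_expansion E"
    unfolding E_def using w(1) by (intro analytic_at_imp_has_fps_expansion_0 analytic_intros)
  have "(\<lambda>z. z * deriv f z) has_fps_expansion fps_X * fps_deriv F"
    by (intro has_fps_expansion_mult has_fps_expansion_fps_X has_fps_expansion_deriv F)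
  hence "(\<lambda>z. f z * wp (w z)) has_fps_expansion fps_X * fps_deriv F"
    using has_fps_expansion_cong[OF eq refl] by blast
  moreover have "(\<lambda>z. f z * wp (w z)) has_fps_expansion F * (1 + W * E)"
    unfolding wp_def
    by (intro has_fps_expansion_mult has_fps_expansion_add has_fps_expansion_1 F W E)
  ultimately have "fps_X * fps_deriv F = F * (1 + W * E)"
    by (rule fps_expansion_unique_complex)
  moreover have "fps_nth F 0 = 0" "fps_nth W 0 = 0" "fps_nth E 0 = 1"
    using F W E f(2) w(2) by (auto dest!: has_fps_expansion_imp_0_eq_fps_nth_0)
  moreover have "fps_nth F 1 = 1" "fps_nth F 2 = 0" "fps_nth F 3 = 0"
    using f(3-5) by (simp_all add: F_def coef_eq_fps_nth fps_expansion_def)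
  ultimately show ?thesis
    unfolding coef_eq_fps_nth F_def[symmetric] W_def[symmetric]
    by (intro fps_nth_4_of_starlike_equation)
qed

lemma norm_coef_le_1_of_maps_disk:
  assumes hol: "w holomorphic_on unit_disk" and maps: "w ` unit_disk \<subseteq> unit_disk"
  shows "norm (coef w n) \<le> 1"
proof -
  have Cauchy: "norm ((deriv ^^ n) w 0) \<le> fact n / r ^ n" if r: "0 < r" "r < 1" for r :: real
  proof -
    have "norm ((deriv ^^ n) w 0) \<le> fact n * 1 / r ^ n"
    proof (rule Cauchy_inequality)
      show "w holomorphic_on ball 0 r" by (rule holomorphic_on_subset[OF hol]) (use r in auto)
      show "continuous_on (cball 0 r) w"
        by (rule continuous_on_subset[OF holomorphic_on_imp_continuous_on[OF hol]]) (use r in auto)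
      show "norm (w z) \<le> 1" if "norm (0 - z) = r" for z
        using that r maps by (force simp: less_imp_le)
    qed (use r in auto)
    thus ?thesis by simp
  qed
  have "((\<lambda>r::real. fact n / r ^ n) \<longlongrightarrow> fact n) (at_left 1)"
    by (auto intro!: tendsto_eq_intros)
  moreover have "eventually (\<lambda>r::real. 0 < r \<and> r < 1) (at_left 1)"
    using eventually_at_left_real[of 0 1] by simp
  ultimately have "norm ((deriv ^^ n) w 0) \<le> fact n"
    by (intro tendsto_le[OF _ _ tendsto_const]) (auto elim: eventually_mono intro: Cauchy)
  thus ?thesis by (simp add: coef_def norm_divide)
qed

lemma norm_coef_4_le_of_starlike_wp:
  assumes st: "starlike_wp f" and sym: "threefold_symmetric f"
  shows "norm (coef f 4) \<le> 1 / 3"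
proof -
  have hol: "f holomorphic_on unit_disk" and "f 0 = 0" "deriv f 0 = 1"
    using st by (auto simp: starlike_wp_def classA_def)
  moreover have "f analytic_on {0}"
    using hol by (auto simp: analytic_on_open[symmetric] elim: analytic_on_subset)
  moreover obtain w where w: "w holomorphic_on unit_disk" "w ` unit_disk \<subseteq> unit_disk" "w 0 = 0"
    and eq: "eventually (\<lambda>z. z * deriv f z = f z * wp (w z)) (nhds 0)"
    using st by (rule starlike_wpE)
  moreover have "w analytic_on {0}"
    using w(1) by (auto simp: analytic_on_open[symmetric] elim: analytic_on_subset)
  ultimately have "3 * coef f 4 = coef w 3"
    using threefold_symmetric_coef_eq_0[OF hol sym] by (intro coef_4_of_starlike_wp_equation) auto
  hence "norm (3 * coef f 4) \<le> 1"
    using norm_coef_le_1_of_maps_disk[OF w(1,2)] by simp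
  thus ?thesis by (simp add: norm_mult)
qed

definition wp_extremal3 :: "complex \<Rightarrow> complex" where
  "wp_extremal3 z = z * exp ((exp (z ^ 3) - 1) / 3)"

lemma deriv_wp_extremal3:
  "deriv wp_extremal3 z = exp ((exp (z ^ 3) - 1) / 3) * (1 + z ^ 3 * exp (z ^ 3))"
proof (rule DERIV_imp_deriv)
  show "(wp_extremal3 has_field_derivative
      exp ((exp (z ^ 3) - 1) / 3) * (1 + z ^ 3 * exp (z ^ 3))) (at z)"
    unfolding wp_extremal3_def[abs_def]
    by (auto intro!: derivative_eq_intros simp: algebra_simps power2_eq_square power3_eq_cube)
qed

lemma wp_extremal3_starlike_equation: "z * deriv wp_extremal3 z = wp_extremal3 z * wp (z ^ 3)"
  by (simp add: deriv_wp_extremal3 wp_extremal3_def wp_def)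

lemma analytic_wp_extremal3: "wp_extremal3 analytic_on S"
  unfolding wp_extremal3_def[abs_def] by (intro analytic_intros) simp

lemma starlike_wp_wp_extremal3: "starlike_wp wp_extremal3"
  unfolding starlike_wp_def classA_def subordinate_def
proof (intro conjI exI[of _ "\<lambda>z. z ^ 3"] analytic_imp_holomorphic analytic_wp_extremal3 ballI)
  show "wp_extremal3 0 = 0" "deriv wp_extremal3 0 = 1"
    by (simp_all add: wp_extremal3_def deriv_wp_extremal3)
  show "(\<lambda>z. z ^ 3) ` unit_disk \<subseteq> unit_disk"
    by (auto simp: norm_power power_less_one_iff)
  fix z :: complex
  show "(if z = 0 then 1 else z * deriv wp_extremal3 z / wp_extremal3 z) = wp (z ^ 3)"
    using wp_extremal3_starlike_equation[of z] by (auto simp: wp_def wp_extremal3_def field_simps)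
qed (auto intro!: analytic_intros)

lemma threefold_symmetric_wp_extremal3: "threefold_symmetric wp_extremal3"
  unfolding threefold_symmetric_def omega3_def[symmetric]
  by (simp add: wp_extremal3_def power_mult_distrib omega3_cube)

lemma coef_wp_extremal3_4: "coef wp_extremal3 4 = 1 / 3"
proof -
  have "(\<lambda>z::complex. z ^ 3) has_fps_expansion fps_X ^ 3"
    by (intro has_fps_expansion_power has_fps_expansion_fps_X)
  hence "coef (\<lambda>z. z ^ 3) 3 = 1"
    by (simp add: coef_eq_fps_nth fps_expansion_eqI)
  moreover have "3 * coef wp_extremal3 4 = coef (\<lambda>z. z ^ 3) 3"
    using threefold_symmetric_coef_eq_0[OF analytic_imp_holomorphic[OF analytic_wp_extremal3]
        threefold_symmetric_wp_extremal3]
    by (intro coef_4_of_starlike_wp_equation)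
      (auto simp: wp_extremal3_def deriv_wp_extremal3 wp_def intro: analytic_intros analytic_wp_extremal3)
  ultimately show ?thesis by (simp add: eq_divide_eq mult.commute)
qed

theorem mainTheorem18:
  shows "(\<forall>f. starlike_wp f \<and> threefold_symmetric f \<longrightarrow>
            norm (hankel3 f) = (norm (coef f 4))^2 \<and> norm (hankel3 f) \<le> 1/9)
       \<and> (let f0 = (\<lambda>z::complex. z * exp ((exp (z^3) - 1) / 3)) in
            starlike_wp f0 \<and> threefold_symmetric f0 \<and> norm (hankel3 f0) = 1/9)"
proof -
  have norm_hankel3: "norm (hankel3 f) = norm (coef f 4) ^ 2"
    if "starlike_wp f" "threefold_symmetric f" for f
    using that hankel3_threefold_symmetric[of f]
    by (simp add: starlike_wp_def classA_def norm_power)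
  have "norm (coef f 4) ^ 2 \<le> (1 / 3) ^ 2" if "starlike_wp f" "threefold_symmetric f" for f
    using norm_coef_4_le_of_starlike_wp[OF that] by (intro power_mono) simp_all
  moreover have "(\<lambda>z::complex. z * exp ((exp (z^3) - 1) / 3)) = wp_extremal3"
    by (simp add: wp_extremal3_def[abs_def])
  ultimately show ?thesis
    using norm_hankel3 starlike_wp_wp_extremal3 threefold_symmetric_wp_extremal3
    by (auto simp: Let_def coef_wp_extremal3_4 power_divide)
qed

end
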